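(* Let $\mathbf{F}$ be a finite field with $q$ elements, $n\ge1$, $V_j=\operatorname{span}(b_1,\dots,b_j)\subseteq\mathbf{F}^n$ for the standard basis, and $r\ge0$. Let $T\colon V_{n-1}\to V_{n-1}$ be a semi-idempotent linear map of rank $\le r$. For $f\colon\mathbf{Z}_{\ge0}\to\mathbf{Z}$ put \[ E_n(f,T)=\sum_{\substack{S\colon V_n\to V_n\ \text{semi-idempotent}\\ \operatorname{rank}S\le r,\ S|_{V_{n-1}}=T}}\mu(\mathrm{srk}\,S)\,f(\operatorname{rank}S), \] where $S|_{V_{n-1}}=T$ means $S(v)=T(v)$ for all $v\in V_{n-1}$. Then (1) if $\operatorname{rank}T\le r-1$, $E_n(f,T)=\mu(\mathrm{srk}\,T)\,q^{\operatorname{rank}T}\big(f(\operatorname{rank}T)-f(\operatorname{rank}T+1)\big)$; (2) if $\operatorname{rank}T=r$, $E_n(f,T)=\mu(\mathrm{srk}\,T)\,q^{\operatorname{rank}T}f(\operatorname{rank}T)$.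
   Context: A linear operator $S$ on a finite-dimensional space $V$ is semi-idempotent if $V=X\oplus Y$ with $X,Y$ $S$-stable, $S|_X=\mathrm{id}$ and $S|_Y$ nilpotent. $\mathrm{srk}$ is the stable rank: rank of the $j$-th power for $j\gg0$. $\mu(i)=(-1)^iq^{\binom i2}$. *)

theory Defs
  imports "Jordan_Normal_Form.DL_Rank"
begin

text \<open>Linear maps on F^d are represented by d x d matrices (standard basis),
  acting on column vectors of dimension d.\<close>

definition is_subspace :: "nat \<Rightarrow> 'a::field vec set \<Rightarrow> bool" where
  "is_subspace d X \<longleftrightarrow> X \<subseteq> carrier_vec d \<and> 0\<^sub>v d \<in> X \<and>
     (\<forall>x\<in>X. \<forall>y\<in>X. x + y \<in> X) \<and> (\<forall>c. \<forall>x\<in>X. c \<cdot>\<^sub>v x \<in> X)"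

definition semi_idempotent :: "nat \<Rightarrow> 'a::field mat \<Rightarrow> bool" where
  "semi_idempotent d S \<longleftrightarrow> S \<in> carrier_mat d d \<and>
     (\<exists>X Y. is_subspace d X \<and> is_subspace d Y \<and> X \<inter> Y = {0\<^sub>v d} \<and>
        (\<forall>v\<in>carrier_vec d. \<exists>x\<in>X. \<exists>y\<in>Y. v = x + y) \<and>
        (\<forall>x\<in>X. S *\<^sub>v x \<in> X) \<and> (\<forall>y\<in>Y. S *\<^sub>v y \<in> Y) \<and>
        (\<forall>x\<in>X. S *\<^sub>v x = x) \<and>
        (\<exists>k. \<forall>y\<in>Y. (S ^\<^sub>m k) *\<^sub>v y = 0\<^sub>v d))"

abbreviation mrank :: "nat \<Rightarrow> 'a::field mat \<Rightarrow> nat" where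
  "mrank d A \<equiv> vec_space.rank d A"

definition srk :: "nat \<Rightarrow> 'a::field mat \<Rightarrow> nat" where
  "srk d S = (THE s. \<exists>N. \<forall>j\<ge>N. mrank d (S ^\<^sub>m j) = s)"

definition mu :: "int \<Rightarrow> nat \<Rightarrow> int" where
  "mu q i = (-1) ^ i * q ^ (i choose 2)"

text \<open>Embedding of V_{n-1} = span(b_1..b_{n-1}) into F^n (last coordinate zero).\<close>
definition embed_vec :: "nat \<Rightarrow> 'a::zero vec \<Rightarrow> 'a vec" where
  "embed_vec n v = vec n (\<lambda>i. if i < n - 1 then v $ i else 0)"

definition restricts_to :: "nat \<Rightarrow> 'a::field mat \<Rightarrow> 'a mat \<Rightarrow> bool" where
  "restricts_to n S T \<longleftrightarrow>
     (\<forall>v\<in>carrier_vec (n - 1). S *\<^sub>v embed_vec n v = embed_vec n (T *\<^sub>v v))"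

definition E_sum :: "int \<Rightarrow> nat \<Rightarrow> nat \<Rightarrow> (nat \<Rightarrow> int) \<Rightarrow> 'a::field mat \<Rightarrow> int" where
  "E_sum q n r f T = (\<Sum>S\<in>{S \<in> carrier_mat n n. semi_idempotent n S \<and> mrank n S \<le> r
        \<and> restricts_to n S T}. mu q (srk n S) * f (mrank n S))"

end

(* A matrix S on F^(d+1) that agrees with T on F^d is a block matrix [T c; 0 a], and its powers are
   [T^j z_j; 0 a^j]. Semi-idempotence means S^(j+1) = S^j for some j, so S is semi-idempotent exactly
   when a = 0, or a = 1 and c lies in the kernel K of the stable power P = T^k. Write t = rank T and
   s = srk T. For a = 0, rank S = t + [c not in im T] and srk S = s; for a = 1, rank S = t + 1 and
   srk S = s + 1. Over a finite field ranks can be read off from cardinalities, |im A| = q^(rank A),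
   and |K| q^s = q^d because P is idempotent. Hence, when t < r, the a = 1 terms,
   q^(d-s) mu(s+1) f(t+1) = -q^d mu(s) f(t+1), cancel the terms with a = 0 and c not in im T up to
   -q^t mu(s) f(t+1); when t = r, all those matrices have rank r + 1 and drop out. *)

theory Submission
  imports Defs Berlekamp_Zassenhaus.Berlekamp_Type_Based
begin

section \<open>Stationary powers\<close>

lemma pow_mat_add:
  assumes "A \<in> carrier_mat n n"
  shows "A ^\<^sub>m (i + j) = A ^\<^sub>m i * A ^\<^sub>m j"
proof (induction j)
  case 0
  show ?case using assms by simp
next
  case (Suc j)
  have "A ^\<^sub>m (i + Suc j) = A ^\<^sub>m i * A ^\<^sub>m j * A" using Suc by simp
  also have "\<dots> = A ^\<^sub>m i * A ^\<^sub>m Suc j"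
    by (simp add: assoc_mult_mat[OF pow_carrier_mat[OF assms] pow_carrier_mat[OF assms] assms])
  finally show ?case .
qed

lemma pow_mat_stable:
  assumes "A ^\<^sub>m Suc k = A ^\<^sub>m k" and "k \<le> j"
  shows "A ^\<^sub>m j = A ^\<^sub>m k"
  using assms(2) by (induction j rule: dec_induct) (use assms(1) in auto)

lemma pow_mat_Suc_mult_vec:
  assumes "A \<in> carrier_mat n n" and "v \<in> carrier_vec n"
  shows "A ^\<^sub>m Suc j *\<^sub>v v = A ^\<^sub>m j *\<^sub>v (A *\<^sub>v v)"
  using assoc_mult_mat_vec[OF pow_carrier_mat[OF assms(1)] assms] by simp

lemma pow_mat_mult_vec_fixed:
  assumes A: "A \<in> carrier_mat n n" and x: "x \<in> carrier_vec n" and fixed: "A *\<^sub>v x = x"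
  shows "A ^\<^sub>m j *\<^sub>v x = x"
proof (induction j)
  case (Suc j)
  then show ?case using pow_mat_Suc_mult_vec[OF A x] fixed by simp
qed (use A x in simp)

lemma idempotent_mat_mult_vec:
  fixes P :: "'a::comm_ring_1 mat"
  assumes P: "P \<in> carrier_mat n n" and idem: "P * P = P" and v: "v \<in> carrier_vec n"
  shows "P *\<^sub>v (P *\<^sub>v v) = P *\<^sub>v v" and "P *\<^sub>v (v - P *\<^sub>v v) = 0\<^sub>v n"
proof -
  show Pv: "P *\<^sub>v (P *\<^sub>v v) = P *\<^sub>v v" using assoc_mult_mat_vec[OF P P v] idem by simp
  show "P *\<^sub>v (v - P *\<^sub>v v) = 0\<^sub>v n" using Pv P v by (simp add: mult_minus_distrib_mat_vec)
qed

lemma eq_mat_by_mult_vec: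
  fixes A B :: "'a::semiring_1 mat"
  assumes A: "A \<in> carrier_mat m n" and B: "B \<in> carrier_mat m n"
    and eq: "\<And>v. v \<in> carrier_vec n \<Longrightarrow> A *\<^sub>v v = B *\<^sub>v v"
  shows "A = B"
proof (rule eq_matI)
  fix i j assume "i < dim_row B" "j < dim_col B"
  then have "A $$ (i, j) = (A *\<^sub>v unit_vec n j) $ i" and "B $$ (i, j) = (B *\<^sub>v unit_vec n j) $ i"
    using A B by auto
  then show "A $$ (i, j) = B $$ (i, j)" using eq[of "unit_vec n j"] by simp
qed (use A B in auto)

lemma semi_idempotent_imp_pow_stable:
  assumes "semi_idempotent m S"
  obtains k where "S ^\<^sub>m Suc k = S ^\<^sub>m k"
proof -
  obtain X Y k where S: "S \<in> carrier_mat m m" and X: "is_subspace m X" and Y: "is_subspace m Y"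
    and decomp: "\<forall>v\<in>carrier_vec m. \<exists>x\<in>X. \<exists>y\<in>Y. v = x + y"
    and stable_Y: "\<forall>y\<in>Y. S *\<^sub>v y \<in> Y" and id_X: "\<forall>x\<in>X. S *\<^sub>v x = x"
    and nil_Y: "\<forall>y\<in>Y. S ^\<^sub>m k *\<^sub>v y = 0\<^sub>v m"
    using assms unfolding semi_idempotent_def by blast
  have X_carrier: "X \<subseteq> carrier_vec m" and Y_carrier: "Y \<subseteq> carrier_vec m"
    using X Y unfolding is_subspace_def by auto
  have "S ^\<^sub>m Suc k = S ^\<^sub>m k"
  proof (rule eq_mat_by_mult_vec)
    fix v :: "'a vec" assume "v \<in> carrier_vec m"
    then obtain x y where x: "x \<in> X" and y: "y \<in> Y" and v: "v = x + y" using decomp by blast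
    have "S ^\<^sub>m j *\<^sub>v x = x" for j
      using pow_mat_mult_vec_fixed[OF S] x X_carrier id_X by auto
    moreover have "S ^\<^sub>m k *\<^sub>v y = 0\<^sub>v m" "S ^\<^sub>m Suc k *\<^sub>v y = 0\<^sub>v m"
      using nil_Y stable_Y pow_mat_Suc_mult_vec[OF S] y Y_carrier by auto
    moreover have "S ^\<^sub>m j *\<^sub>v v = S ^\<^sub>m j *\<^sub>v x + S ^\<^sub>m j *\<^sub>v y" for j
      unfolding v by (rule mult_add_distrib_mat_vec[OF pow_carrier_mat[OF S]])
        (use x y X_carrier Y_carrier in auto)
    ultimately show "S ^\<^sub>m Suc k *\<^sub>v v = S ^\<^sub>m k *\<^sub>v v"
      using x X_carrier by (metis right_zero_vec subsetD)
  qed (use S in auto)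
  then show thesis by (rule that)
qed

lemma pow_stable_imp_semi_idempotent:
  assumes S: "S \<in> carrier_mat m m" and k: "S ^\<^sub>m Suc k = S ^\<^sub>m k"
  shows "semi_idempotent m S"
proof -
  define P where "P = S ^\<^sub>m k"
  have P: "P \<in> carrier_mat m m" unfolding P_def using S by simp
  have PP: "P * P = P"
    unfolding P_def using pow_mat_add[OF S, of k k] pow_mat_stable[OF k, of "k + k"] by simp
  have SP: "S * P = P" and PS: "P * S = P"
    unfolding P_def using pow_mat_add[OF S, of 1 k] S k by auto
  define X where "X = {v \<in> carrier_vec m. S *\<^sub>v v = v}"
  define Y where "Y = {v \<in> carrier_vec m. P *\<^sub>v v = 0\<^sub>v m}"
  have X: "is_subspace m X" and Y: "is_subspace m Y"
    unfolding is_subspace_def X_def Y_def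
    using S P by (auto simp: mult_add_distrib_mat_vec mult_mat_vec)
  have "X \<inter> Y \<subseteq> {0\<^sub>v m}"
    using pow_mat_mult_vec_fixed[OF S] unfolding X_def Y_def P_def by auto
  then have inter: "X \<inter> Y = {0\<^sub>v m}"
    using X Y unfolding is_subspace_def by auto
  have decomp: "\<exists>x\<in>X. \<exists>y\<in>Y. v = x + y" if v: "v \<in> carrier_vec m" for v
  proof (intro bexI)
    show "P *\<^sub>v v \<in> X"
      unfolding X_def using assoc_mult_mat_vec[OF S P v] SP P v by simp
    show "v - P *\<^sub>v v \<in> Y"
      unfolding Y_def using idempotent_mat_mult_vec(2)[OF P PP v] P v by simp
  qed (use P v in auto)
  have stable_Y: "S *\<^sub>v y \<in> Y" if "y \<in> Y" for y
    using that assoc_mult_mat_vec[OF P S] S unfolding Y_def PS by auto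
  show ?thesis
    unfolding semi_idempotent_def
  proof (intro conjI S, rule exI[of _ X], rule exI[of _ Y],
      intro conjI ballI exI[of _ k] X Y inter decomp stable_Y)
    show "S *\<^sub>v x \<in> X" and "S *\<^sub>v x = x" if "x \<in> X" for x
      using that unfolding X_def by auto
    show "S ^\<^sub>m k *\<^sub>v y = 0\<^sub>v m" if "y \<in> Y" for y
      using that unfolding Y_def P_def by auto
  qed
qed

lemma srk_eqI:
  assumes "\<And>j. N \<le> j \<Longrightarrow> mrank m (S ^\<^sub>m j) = s"
  shows "srk m S = s"
  unfolding srk_def
proof (rule the_equality)
  show "\<exists>N. \<forall>j\<ge>N. mrank m (S ^\<^sub>m j) = s" using assms by blast
next
  fix s' assume "\<exists>N'. \<forall>j\<ge>N'. mrank m (S ^\<^sub>m j) = s'"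
  then obtain N' where "\<forall>j\<ge>N'. mrank m (S ^\<^sub>m j) = s'" by blast
  then show "s' = s" using assms[of "max N N'"] by simp
qed

lemma srk_pow_stable:
  assumes "S ^\<^sub>m Suc k = S ^\<^sub>m k"
  shows "srk m S = mrank m (S ^\<^sub>m k)"
proof (rule srk_eqI)
  fix j assume "k \<le> j"
  show "mrank m (S ^\<^sub>m j) = mrank m (S ^\<^sub>m k)" unfolding pow_mat_stable[OF assms \<open>k \<le> j\<close>] ..
qed

section \<open>Counting vectors over a finite field\<close>

lemma (in vectorspace) card_carrier_eq_pow_dim:
  assumes "fin_dim"
  shows "card (carrier V) = card (carrier K) ^ dim"
proof -
  obtain B where B: "finite B" "basis B" using finite_basis_exists[OF assms] by blast
  have B_carrier: "B \<subseteq> carrier V" using B(2) unfolding basis_def by simp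
  have unique: "\<forall>v\<in>carrier V. \<exists>!a. a \<in> B \<rightarrow>\<^sub>E carrier K \<and> lincomb a B = v"
    using B(2) unfolding basis_criterion[OF B(1) B_carrier] by blast
  have "bij_betw (\<lambda>a. lincomb a B) (B \<rightarrow>\<^sub>E carrier K) (carrier V)"
  proof (rule bij_betwI')
    show "lincomb a B = lincomb a' B \<longleftrightarrow> a = a'"
      if "a \<in> B \<rightarrow>\<^sub>E carrier K" "a' \<in> B \<rightarrow>\<^sub>E carrier K" for a a'
    proof
      assume eq: "lincomb a B = lincomb a' B"
      have "lincomb a B \<in> carrier V" using that(1) B_carrier by auto
      then have "\<exists>!c. c \<in> B \<rightarrow>\<^sub>E carrier K \<and> lincomb c B = lincomb a B" using unique by blast
      from the1_equality[OF this, of a] the1_equality[OF this, of a'] show "a = a'"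
        using that eq by simp
    qed simp
    show "lincomb a B \<in> carrier V" if "a \<in> B \<rightarrow>\<^sub>E carrier K" for a
      using that B_carrier by auto
    show "\<exists>a\<in>B \<rightarrow>\<^sub>E carrier K. v = lincomb a B" if "v \<in> carrier V" for v
      using unique that by blast
  qed
  then have "card (carrier V) = card (B \<rightarrow>\<^sub>E carrier K)" by (simp add: bij_betw_same_card)
  then show ?thesis using B by (simp add: card_PiE dim_basis)
qed

lemma (in vec_space) card_col_space:
  assumes "A \<in> carrier_mat n nc"
  shows "card (col_space A) = CARD('a) ^ rank A"
proof -
  have cols: "set (cols A) \<subseteq> carrier_vec n" using cols_dim[of A] assms by (simp add: carrier_matD)
  interpret col: vectorspace class_ring "span_vs (set (cols A))"
    using field.field_axioms vectorspace_def submodule_is_module[OF span_is_submodule[OF cols]] by metis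
  have "card (span (set (cols A))) = card (carrier (class_ring :: 'a ring)) ^ rank A"
    using col.card_carrier_eq_pow_dim[OF fin_dim_span_cols[OF assms]] unfolding rank_def by simp
  then show ?thesis unfolding col_space_def by (simp add: class_ring_simps)
qed

lemma mem_col_space_iff:
  assumes "A \<in> carrier_mat m nc"
  shows "y \<in> vec_space.col_space m A \<longleftrightarrow> (\<exists>x\<in>carrier_vec nc. y = A *\<^sub>v x)"
  using vec_space.col_space_eq[OF assms] assms by auto

lemma col_space_is_subspace:
  assumes A: "A \<in> carrier_mat m nc"
  shows "is_subspace m (vec_space.col_space m A)"
  unfolding is_subspace_def
proof (intro conjI allI ballI subsetI)
  fix y assume "y \<in> vec_space.col_space m A"
  then show "y \<in> carrier_vec m" using A mem_col_space_iff[OF A] by auto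
next
  show "0\<^sub>v m \<in> vec_space.col_space m A"
    unfolding mem_col_space_iff[OF A] using A by (intro bexI[of _ "0\<^sub>v nc"]) auto
next
  fix y y' assume "y \<in> vec_space.col_space m A" "y' \<in> vec_space.col_space m A"
  then show "y + y' \<in> vec_space.col_space m A"
    unfolding mem_col_space_iff[OF A] using A by (metis add_carrier_vec mult_add_distrib_mat_vec)
next
  fix c y assume "y \<in> vec_space.col_space m A"
  then show "c \<cdot>\<^sub>v y \<in> vec_space.col_space m A"
    unfolding mem_col_space_iff[OF A] using A by (metis mult_mat_vec smult_carrier_vec)
qed

lemma card_field_ge_2: "2 \<le> CARD('a::{field,finite})"
proof -
  have "card {0::'a, 1} \<le> CARD('a)" by (rule card_mono) auto
  then show ?thesis by simp
qed

lemma mrank_eqI_card_col_space: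
  fixes A :: "'a::{field,finite} mat"
  assumes A: "A \<in> carrier_mat m nc" and card: "card (vec_space.col_space m A) = CARD('a) ^ s"
  shows "mrank m A = s"
  using vec_space.card_col_space[OF A] card card_field_ge_2[where 'a = 'a]
  by (simp add: power_inject_exp)

lemma inj_on_subspace_plus_line:
  fixes W :: "'a::field vec set"
  assumes W: "is_subspace n W" and v: "v \<in> carrier_vec n" and "v \<notin> W"
  shows "inj_on (\<lambda>(w, b). w + b \<cdot>\<^sub>v v) (W \<times> UNIV)"
proof (rule inj_onI, clarsimp)
  fix w w' b b' assume w: "w \<in> W" and w': "w' \<in> W" and eq: "w + b \<cdot>\<^sub>v v = w' + b' \<cdot>\<^sub>v v"
  have wc: "w \<in> carrier_vec n" "w' \<in> carrier_vec n" using w w' W unfolding is_subspace_def by auto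
  have comp: "w $ i + b * v $ i = w' $ i + b' * v $ i" if "i < n" for i
    using arg_cong[OF eq, of "\<lambda>x. x $ i"] that wc v by simp
  show "w = w' \<and> b = b'"
  proof (cases "b = b'")
    case True
    then have "w = w'" using comp wc by (intro eq_vecI) auto
    then show ?thesis using True by simp
  next
    case False
    define c where "c = inverse (b - b')"
    have "v $ i = c * (w' $ i - w $ i)" if "i < n" for i
    proof -
      have "(b - b') * v $ i = w' $ i - w $ i" using comp[OF that] by (simp add: algebra_simps)
      then show ?thesis using False unfolding c_def by (simp add: field_simps)
    qed
    then have "v = c \<cdot>\<^sub>v w' + (- c) \<cdot>\<^sub>v w"
      using wc v by (intro eq_vecI) (auto simp: algebra_simps)
    also have "\<dots> \<in> W" using W w w' unfolding is_subspace_def by simp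
    finally show ?thesis using \<open>v \<notin> W\<close> by simp
  qed
qed

lemma card_subspace_plus_line:
  fixes W :: "'a::{field,finite} vec set"
  assumes W: "is_subspace n W" and v: "v \<in> carrier_vec n"
  shows "card {w + b \<cdot>\<^sub>v v | w b. w \<in> W} = (if v \<in> W then card W else card W * CARD('a))"
proof (cases "v \<in> W")
  case True
  have "{w + b \<cdot>\<^sub>v v | w b. w \<in> W} = W"
  proof (intro equalityI subsetI)
    show "x \<in> W" if "x \<in> {w + b \<cdot>\<^sub>v v | w b. w \<in> W}" for x
      using that W True unfolding is_subspace_def by auto
    show "x \<in> {w + b \<cdot>\<^sub>v v | w b. w \<in> W}" if "x \<in> W" for x
    proof -
      have "x = x + 0 \<cdot>\<^sub>v v" using that W v unfolding is_subspace_def by (intro eq_vecI) auto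
      then show ?thesis using that by blast
    qed
  qed
  then show ?thesis using True by simp
next
  case False
  have "{w + b \<cdot>\<^sub>v v | w b. w \<in> W} = (\<lambda>(w, b). w + b \<cdot>\<^sub>v v) ` (W \<times> UNIV)"
    by auto
  then show ?thesis
    using inj_on_subspace_plus_line[OF W v False] False by (simp add: card_image card_cartesian_product)
qed

lemma card_mat_kernel_idempotent:
  fixes P :: "'a::{field,finite} mat"
  assumes P: "P \<in> carrier_mat n n" and idem: "P * P = P"
  shows "card (mat_kernel P) * CARD('a) ^ mrank n P = CARD('a) ^ n"
proof -
  let ?W = "vec_space.col_space n P"
  have W: "w \<in> ?W \<longleftrightarrow> w \<in> carrier_vec n \<and> P *\<^sub>v w = w" for w
  proof
    assume "w \<in> ?W"
    then obtain x where "x \<in> carrier_vec n" "w = P *\<^sub>v x" unfolding mem_col_space_iff[OF P] by blast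
    then show "w \<in> carrier_vec n \<and> P *\<^sub>v w = w" using idempotent_mat_mult_vec(1)[OF P idem] P by simp
  next
    assume "w \<in> carrier_vec n \<and> P *\<^sub>v w = w"
    then show "w \<in> ?W" unfolding mem_col_space_iff[OF P] by (intro bexI[of _ w]) auto
  qed
  have K: "y \<in> mat_kernel P \<longleftrightarrow> y \<in> carrier_vec n \<and> P *\<^sub>v y = 0\<^sub>v n" for y
    using P unfolding mat_kernel_def by auto
  have "bij_betw (\<lambda>(w, y). w + y) (?W \<times> mat_kernel P) (carrier_vec n)"
  proof (rule bij_betwI[where g = "\<lambda>v. (P *\<^sub>v v, v - P *\<^sub>v v)"])
    show "(\<lambda>(w, y). w + y) \<in> ?W \<times> mat_kernel P \<rightarrow> carrier_vec n"
      by (auto simp: W K)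
    show "(\<lambda>v. (P *\<^sub>v v, v - P *\<^sub>v v)) \<in> carrier_vec n \<rightarrow> ?W \<times> mat_kernel P"
      using idempotent_mat_mult_vec[OF P idem] P by (auto simp: W K)
    show "(\<lambda>v. (P *\<^sub>v v, v - P *\<^sub>v v)) ((\<lambda>(w, y). w + y) p) = p"
      if p_mem: "p \<in> ?W \<times> mat_kernel P" for p
    proof -
      obtain w y where p: "p = (w, y)" and w: "w \<in> carrier_vec n" "P *\<^sub>v w = w"
        and y: "y \<in> carrier_vec n" "P *\<^sub>v y = 0\<^sub>v n"
        using p_mem by (cases p) (auto simp: W K)
      then have "P *\<^sub>v (w + y) = w" using P by (simp add: mult_add_distrib_mat_vec)
      then show ?thesis using w y p by auto
    qed
    show "(\<lambda>(w, y). w + y) ((\<lambda>v. (P *\<^sub>v v, v - P *\<^sub>v v)) v) = v" if "v \<in> carrier_vec n" for v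
      using that P by auto
  qed
  then have "card (carrier_vec n :: 'a vec set) = card (?W \<times> mat_kernel P)"
    by (simp add: bij_betw_same_card)
  then show ?thesis
    by (simp add: card_carrier_vec card_cartesian_product vec_space.card_col_space[OF P])
qed

lemma card_carrier_vec_diff_col_space:
  fixes A :: "'a::{field,finite} mat"
  assumes A: "A \<in> carrier_mat m nc"
  shows "int (card (carrier_vec m - vec_space.col_space m A)) = int CARD('a) ^ m - int CARD('a) ^ mrank m A"
proof -
  have sub: "vec_space.col_space m A \<subseteq> carrier_vec m"
    using col_space_is_subspace[OF A] unfolding is_subspace_def by simp
  then have "card (vec_space.col_space m A) \<le> card (carrier_vec m :: 'a vec set)"
    by (simp add: card_mono)
  then show ?thesis
    using sub by (simp add: card_Diff_subset finite_subset card_carrier_vec vec_space.card_col_space[OF A] of_nat_diff)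
qed

lemma sum_if_mem_const:
  assumes "finite A" and "B \<subseteq> A"
  shows "(\<Sum>x\<in>A. if x \<in> B then u else v)
    = of_nat (card B) * u + of_nat (card (A - B)) * (v :: 'a::comm_semiring_1)"
proof -
  have "(\<Sum>x\<in>A. if x \<in> B then u else v) = (\<Sum>x\<in>A \<inter> B. u) + (\<Sum>x\<in>A - B. v)"
    using sum.If_cases[OF assms(1), of "\<lambda>x. x \<in> B" "\<lambda>_. u" "\<lambda>_. v"] by (simp add: Diff_eq)
  also have "A \<inter> B = B" using assms(2) by blast
  finally show ?thesis by simp
qed

section \<open>Block upper triangular matrices\<close>

definition block_mat :: "nat \<Rightarrow> 'a::zero mat \<Rightarrow> 'a vec \<Rightarrow> 'a \<Rightarrow> 'a mat" where
  "block_mat d A z \<beta> = mat (Suc d) (Suc d) (\<lambda>(i, j).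
     if i < d then (if j < d then A $$ (i, j) else z $ i) else (if j < d then 0 else \<beta>))"

lemma block_mat_carrier [simp]: "block_mat d A z \<beta> \<in> carrier_mat (Suc d) (Suc d)"
  and dim_block_mat [simp]:
    "dim_row (block_mat d A z \<beta>) = Suc d" "dim_col (block_mat d A z \<beta>) = Suc d"
  unfolding block_mat_def by auto

lemma index_block_mat:
  "i < Suc d \<Longrightarrow> j < Suc d \<Longrightarrow> block_mat d A z \<beta> $$ (i, j) =
     (if i < d then (if j < d then A $$ (i, j) else z $ i) else (if j < d then 0 else \<beta>))"
  unfolding block_mat_def by simp

lemma block_mat_mult:
  fixes A A' :: "'a::comm_ring_1 mat"
  assumes "A \<in> carrier_mat d d" "A' \<in> carrier_mat d d" "z \<in> carrier_vec d" "z' \<in> carrier_vec d"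
  shows "block_mat d A z \<beta> * block_mat d A' z' \<beta>'
    = block_mat d (A * A') (A *\<^sub>v z' + \<beta>' \<cdot>\<^sub>v z) (\<beta> * \<beta>')"
proof (rule eq_matI)
  fix i j assume "i < dim_row (block_mat d (A * A') (A *\<^sub>v z' + \<beta>' \<cdot>\<^sub>v z) (\<beta> * \<beta>'))"
    "j < dim_col (block_mat d (A * A') (A *\<^sub>v z' + \<beta>' \<cdot>\<^sub>v z) (\<beta> * \<beta>'))"
  then have ij: "i < Suc d" "j < Suc d" by auto
  have "(block_mat d A z \<beta> * block_mat d A' z' \<beta>') $$ (i, j) =
      (\<Sum>l<d. block_mat d A z \<beta> $$ (i, l) * block_mat d A' z' \<beta>' $$ (l, j))
      + block_mat d A z \<beta> $$ (i, d) * block_mat d A' z' \<beta>' $$ (d, j)"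
    using ij by (simp add: scalar_prod_def lessThan_atLeast0)
  then show "(block_mat d A z \<beta> * block_mat d A' z' \<beta>') $$ (i, j)
      = block_mat d (A * A') (A *\<^sub>v z' + \<beta>' \<cdot>\<^sub>v z) (\<beta> * \<beta>') $$ (i, j)"
    using ij assms by (auto simp: index_block_mat scalar_prod_def less_Suc_eq)
qed auto

lemma block_mat_one: "block_mat d (1\<^sub>m d) (0\<^sub>v d) 1 = 1\<^sub>m (Suc d)"
  by (rule eq_matI) (auto simp: index_block_mat less_Suc_eq)

lemma block_mat_inject:
  assumes "A \<in> carrier_mat d d" "A' \<in> carrier_mat d d" "z \<in> carrier_vec d" "z' \<in> carrier_vec d"
  shows "block_mat d A z \<beta> = block_mat d A' z' \<beta>' \<longleftrightarrow> A = A' \<and> z = z' \<and> \<beta> = \<beta>'"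
proof
  assume eq: "block_mat d A z \<beta> = block_mat d A' z' \<beta>'"
  have entry: "block_mat d A z \<beta> $$ (i, j) = block_mat d A' z' \<beta>' $$ (i, j)" for i j
    using eq by simp
  have "A $$ (i, j) = A' $$ (i, j)" if "i < d" "j < d" for i j
    using entry[of i j] that by (simp add: index_block_mat)
  moreover have "z $ i = z' $ i" if "i < d" for i
    using entry[of i d] that by (simp add: index_block_mat)
  moreover have "\<beta> = \<beta>'" using entry[of d d] by (simp add: index_block_mat)
  ultimately show "A = A' \<and> z = z' \<and> \<beta> = \<beta>'"
    using assms by (auto intro!: eq_matI eq_vecI)
qed simp

primrec pow_corner :: "'a::comm_ring_1 mat \<Rightarrow> 'a vec \<Rightarrow> 'a \<Rightarrow> nat \<Rightarrow> 'a vec" where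
  "pow_corner A z \<beta> 0 = 0\<^sub>v (dim_vec z)"
| "pow_corner A z \<beta> (Suc j) = A ^\<^sub>m j *\<^sub>v z + \<beta> \<cdot>\<^sub>v pow_corner A z \<beta> j"

lemma pow_corner_carrier:
  assumes "A \<in> carrier_mat d d" "z \<in> carrier_vec d"
  shows "pow_corner A z \<beta> j \<in> carrier_vec d"
  using assms by (induction j) (auto intro!: add_carrier_vec mult_mat_vec_carrier[of _ d d])

lemma block_mat_pow:
  fixes A :: "'a::comm_ring_1 mat"
  assumes A: "A \<in> carrier_mat d d" and z: "z \<in> carrier_vec d"
  shows "block_mat d A z \<beta> ^\<^sub>m j = block_mat d (A ^\<^sub>m j) (pow_corner A z \<beta> j) (\<beta> ^ j)"
proof (induction j)
  case 0
  have "block_mat d (A ^\<^sub>m 0) (pow_corner A z \<beta> 0) (\<beta> ^ 0) = block_mat d (1\<^sub>m d) (0\<^sub>v d) 1"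
    using A z by simp
  then show ?case unfolding block_mat_one by simp
next
  case (Suc j)
  then show ?case
    using block_mat_mult[OF pow_carrier_mat[OF A] A pow_corner_carrier[OF A z] z]
    by (simp add: mult.commute)
qed

lemma block_mat_pow_Suc_eq_iff:
  fixes A :: "'a::comm_ring_1 mat"
  assumes A: "A \<in> carrier_mat d d" and z: "z \<in> carrier_vec d"
  shows "block_mat d A z \<beta> ^\<^sub>m Suc j = block_mat d A z \<beta> ^\<^sub>m j \<longleftrightarrow>
    A ^\<^sub>m Suc j = A ^\<^sub>m j \<and> pow_corner A z \<beta> (Suc j) = pow_corner A z \<beta> j \<and> \<beta> ^ Suc j = \<beta> ^ j"
  unfolding block_mat_pow[OF A z]
  by (rule block_mat_inject)
    (use A z pow_carrier_mat[OF A, of "Suc j"] pow_corner_carrier[OF A z] in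
      \<open>simp_all del: pow_mat.simps pow_corner.simps\<close>)

lemma pow_corner_zero:
  assumes "A \<in> carrier_mat d d" "z \<in> carrier_vec d"
  shows "pow_corner A z 0 (Suc j) = A ^\<^sub>m j *\<^sub>v z"
  using assms pow_corner_carrier[OF assms, of 0 j] by (intro eq_vecI) auto

lemma dim_embed_vec [simp]: "dim_vec (embed_vec n u) = n"
  and embed_vec_carrier [simp]: "embed_vec n u \<in> carrier_vec n"
  and index_embed_vec [simp]: "i < Suc d \<Longrightarrow> embed_vec (Suc d) u $ i = (if i < d then u $ i else 0)"
  unfolding embed_vec_def by auto

lemma inj_on_embed_vec: "inj_on (embed_vec (Suc d)) (carrier_vec d)"
proof (rule inj_onI)
  fix u w :: "'a vec" assume "u \<in> carrier_vec d" "w \<in> carrier_vec d"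
    and eq: "embed_vec (Suc d) u = embed_vec (Suc d) w"
  moreover have "u $ i = w $ i" if "i < d" for i
    using arg_cong[OF eq, of "\<lambda>v. v $ i"] that by simp
  ultimately show "u = w" by (auto intro: eq_vecI)
qed

lemma embed_vec_add:
  "u \<in> carrier_vec d \<Longrightarrow> w \<in> carrier_vec d \<Longrightarrow>
    embed_vec (Suc d) (u + w) = embed_vec (Suc d) u + embed_vec (Suc d) (w :: 'a::monoid_add vec)"
  by (rule eq_vecI) auto

lemma embed_vec_smult:
  "u \<in> carrier_vec d \<Longrightarrow> embed_vec (Suc d) (c \<cdot>\<^sub>v u) = c \<cdot>\<^sub>v embed_vec (Suc d) (u :: 'a::semiring_0 vec)"
  by (rule eq_vecI) auto

lemma embed_vec_eq_plus_zero:
  "embed_vec (Suc d) u = embed_vec (Suc d) u + (0::'a::semiring_1) \<cdot>\<^sub>v unit_vec (Suc d) d"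
  by (intro eq_vecI) auto

lemma embed_vec_plus_unit_vec_inject:
  fixes u w :: "'a::semiring_1 vec"
  assumes "u \<in> carrier_vec d" "w \<in> carrier_vec d"
  shows "embed_vec (Suc d) u + a \<cdot>\<^sub>v unit_vec (Suc d) d = embed_vec (Suc d) w + b \<cdot>\<^sub>v unit_vec (Suc d) d
    \<longleftrightarrow> u = w \<and> a = b"
proof
  assume eq: "embed_vec (Suc d) u + a \<cdot>\<^sub>v unit_vec (Suc d) d = embed_vec (Suc d) w + b \<cdot>\<^sub>v unit_vec (Suc d) d"
  have "u $ i = w $ i" if "i < d" for i
    using arg_cong[OF eq, of "\<lambda>v. v $ i"] that by simp
  moreover have "a = b" using arg_cong[OF eq, of "\<lambda>v. v $ d"] by simp
  ultimately show "u = w \<and> a = b" using assms by (auto intro: eq_vecI)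
qed simp

lemma carrier_vec_Suc_decomp:
  fixes v :: "'a::semiring_1 vec"
  assumes "v \<in> carrier_vec (Suc d)"
  shows "v = embed_vec (Suc d) (vec d (\<lambda>i. v $ i)) + v $ d \<cdot>\<^sub>v unit_vec (Suc d) d"
  using assms by (intro eq_vecI) (auto simp: less_Suc_eq)

lemma is_subspace_embed_vec:
  assumes "is_subspace d W"
  shows "is_subspace (Suc d) (embed_vec (Suc d) ` W)"
  using assms unfolding is_subspace_def
  by (auto simp: embed_vec_add[symmetric] embed_vec_smult[symmetric] subset_iff
      intro!: image_eqI[of "0\<^sub>v (Suc d)" _ "0\<^sub>v d"] eq_vecI)

lemma embed_vec_plus_unit_vec_mem_image_iff:
  fixes z :: "'a::semiring_1 vec"
  assumes z: "z \<in> carrier_vec d" and W: "W \<subseteq> carrier_vec d"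
  shows "embed_vec (Suc d) z + \<beta> \<cdot>\<^sub>v unit_vec (Suc d) d \<in> embed_vec (Suc d) ` W \<longleftrightarrow> \<beta> = 0 \<and> z \<in> W"
proof
  assume "embed_vec (Suc d) z + \<beta> \<cdot>\<^sub>v unit_vec (Suc d) d \<in> embed_vec (Suc d) ` W"
  then obtain w where w: "w \<in> W"
    and eq: "embed_vec (Suc d) z + \<beta> \<cdot>\<^sub>v unit_vec (Suc d) d = embed_vec (Suc d) w" by auto
  have "embed_vec (Suc d) z + \<beta> \<cdot>\<^sub>v unit_vec (Suc d) d = embed_vec (Suc d) w + 0 \<cdot>\<^sub>v unit_vec (Suc d) d"
    using eq embed_vec_eq_plus_zero[of d w] by (rule trans)
  with w show "\<beta> = 0 \<and> z \<in> W" using embed_vec_plus_unit_vec_inject z W by blast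
next
  assume "\<beta> = 0 \<and> z \<in> W"
  then show "embed_vec (Suc d) z + \<beta> \<cdot>\<^sub>v unit_vec (Suc d) d \<in> embed_vec (Suc d) ` W"
    using embed_vec_eq_plus_zero[of d z, symmetric] by auto
qed

lemma block_mat_mult_vec:
  fixes A :: "'a::comm_ring_1 mat"
  assumes A: "A \<in> carrier_mat d d" and z: "z \<in> carrier_vec d" and u: "u \<in> carrier_vec d"
  shows "block_mat d A z \<beta> *\<^sub>v (embed_vec (Suc d) u + b \<cdot>\<^sub>v unit_vec (Suc d) d)
    = embed_vec (Suc d) (A *\<^sub>v u) + b \<cdot>\<^sub>v (embed_vec (Suc d) z + \<beta> \<cdot>\<^sub>v unit_vec (Suc d) d)"
proof (rule eq_vecI)
  fix i assume "i < dim_vec (embed_vec (Suc d) (A *\<^sub>v u) + b \<cdot>\<^sub>v (embed_vec (Suc d) z + \<beta> \<cdot>\<^sub>v unit_vec (Suc d) d))"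
  then have i: "i < Suc d" by simp
  let ?v = "embed_vec (Suc d) u + b \<cdot>\<^sub>v unit_vec (Suc d) d"
  have "(block_mat d A z \<beta> *\<^sub>v ?v) $ i = (\<Sum>l<d. block_mat d A z \<beta> $$ (i, l) * ?v $ l)
      + block_mat d A z \<beta> $$ (i, d) * ?v $ d"
    using i by (simp add: scalar_prod_def lessThan_atLeast0)
  then show "(block_mat d A z \<beta> *\<^sub>v ?v) $ i
      = (embed_vec (Suc d) (A *\<^sub>v u) + b \<cdot>\<^sub>v (embed_vec (Suc d) z + \<beta> \<cdot>\<^sub>v unit_vec (Suc d) d)) $ i"
    using i A z u by (auto simp: index_block_mat scalar_prod_def less_Suc_eq mult.commute)
qed simp

lemma col_space_block_mat:
  fixes A :: "'a::field mat"
  assumes A: "A \<in> carrier_mat d d" and z: "z \<in> carrier_vec d"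
  shows "vec_space.col_space (Suc d) (block_mat d A z \<beta>) =
    {w + b \<cdot>\<^sub>v (embed_vec (Suc d) z + \<beta> \<cdot>\<^sub>v unit_vec (Suc d) d) | w b.
       w \<in> embed_vec (Suc d) ` vec_space.col_space d A}"
    (is "_ = {w + b \<cdot>\<^sub>v ?e | w b. w \<in> _}")
proof (intro equalityI subsetI)
  fix y assume "y \<in> vec_space.col_space (Suc d) (block_mat d A z \<beta>)"
  then obtain x where x: "x \<in> carrier_vec (Suc d)" and y: "y = block_mat d A z \<beta> *\<^sub>v x"
    unfolding mem_col_space_iff[OF block_mat_carrier] by blast
  let ?u = "vec d (\<lambda>i. x $ i)"
  have "y = embed_vec (Suc d) (A *\<^sub>v ?u) + x $ d \<cdot>\<^sub>v ?e"
    unfolding y by (subst carrier_vec_Suc_decomp[OF x]) (rule block_mat_mult_vec[OF A z], simp)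
  moreover have "A *\<^sub>v ?u \<in> vec_space.col_space d A"
    unfolding mem_col_space_iff[OF A] by auto
  ultimately show "y \<in> {w + b \<cdot>\<^sub>v ?e | w b. w \<in> embed_vec (Suc d) ` vec_space.col_space d A}"
    by blast
next
  fix y assume "y \<in> {w + b \<cdot>\<^sub>v ?e | w b. w \<in> embed_vec (Suc d) ` vec_space.col_space d A}"
  then obtain u b where u: "u \<in> carrier_vec d" and y: "y = embed_vec (Suc d) (A *\<^sub>v u) + b \<cdot>\<^sub>v ?e"
    by (auto simp: mem_col_space_iff[OF A])
  then have "y = block_mat d A z \<beta> *\<^sub>v (embed_vec (Suc d) u + b \<cdot>\<^sub>v unit_vec (Suc d) d)"
    using block_mat_mult_vec[OF A z u] by simp
  then show "y \<in> vec_space.col_space (Suc d) (block_mat d A z \<beta>)"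
    unfolding mem_col_space_iff[OF block_mat_carrier] by auto
qed

lemma rank_block_mat:
  fixes A :: "'a::{field,finite} mat"
  assumes A: "A \<in> carrier_mat d d" and z: "z \<in> carrier_vec d"
  shows "mrank (Suc d) (block_mat d A z \<beta>) =
    mrank d A + (if \<beta> = 0 \<and> z \<in> vec_space.col_space d A then 0 else 1)"
proof (rule mrank_eqI_card_col_space)
  let ?W = "vec_space.col_space d A"
  have W: "is_subspace d ?W" by (rule col_space_is_subspace[OF A])
  then have W_carrier: "?W \<subseteq> carrier_vec d" unfolding is_subspace_def by simp
  have "card (embed_vec (Suc d) ` ?W) = card ?W"
    using W_carrier inj_on_embed_vec by (auto intro: card_image inj_on_subset)
  then show "card (vec_space.col_space (Suc d) (block_mat d A z \<beta>)) =
      CARD('a) ^ (mrank d A + (if \<beta> = 0 \<and> z \<in> ?W then 0 else 1))"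
    unfolding col_space_block_mat[OF A z]
    using card_subspace_plus_line[OF is_subspace_embed_vec[OF W], of "embed_vec (Suc d) z + \<beta> \<cdot>\<^sub>v unit_vec (Suc d) d"]
      embed_vec_plus_unit_vec_mem_image_iff[OF z W_carrier] vec_space.card_col_space[OF A]
    by auto
qed (rule block_mat_carrier)

section \<open>Extensions of a matrix by one dimension\<close>

lemma restricts_to_block_mat:
  fixes T :: "'a::field mat"
  assumes T: "T \<in> carrier_mat d d" and c: "c \<in> carrier_vec d"
  shows "restricts_to (Suc d) (block_mat d T c a) T"
  unfolding restricts_to_def
proof (intro ballI)
  fix u :: "'a vec" assume "u \<in> carrier_vec (Suc d - 1)"
  then have u: "u \<in> carrier_vec d" by simp
  have "block_mat d T c a *\<^sub>v embed_vec (Suc d) u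
      = embed_vec (Suc d) (T *\<^sub>v u) + 0 \<cdot>\<^sub>v (embed_vec (Suc d) c + a \<cdot>\<^sub>v unit_vec (Suc d) d)"
    by (subst embed_vec_eq_plus_zero) (rule block_mat_mult_vec[OF T c u])
  also have "\<dots> = embed_vec (Suc d) (T *\<^sub>v u)"
    by (intro eq_vecI) auto
  finally show "block_mat d T c a *\<^sub>v embed_vec (Suc d) u = embed_vec (Suc d) (T *\<^sub>v u)" .
qed

lemma restricts_to_imp_block_mat:
  fixes S T :: "'a::field mat"
  assumes S: "S \<in> carrier_mat (Suc d) (Suc d)" and T: "T \<in> carrier_mat d d"
    and R: "restricts_to (Suc d) S T"
  shows "S = block_mat d T (vec d (\<lambda>i. S $$ (i, d))) (S $$ (d, d))"
proof (rule eq_matI)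
  fix i j assume "i < dim_row (block_mat d T (vec d (\<lambda>i. S $$ (i, d))) (S $$ (d, d)))"
    "j < dim_col (block_mat d T (vec d (\<lambda>i. S $$ (i, d))) (S $$ (d, d)))"
  then have ij: "i < Suc d" "j < Suc d" by auto
  show "S $$ (i, j) = block_mat d T (vec d (\<lambda>i. S $$ (i, d))) (S $$ (d, d)) $$ (i, j)"
  proof (cases "j < d")
    case True
    have "unit_vec (Suc d) j = (embed_vec (Suc d) (unit_vec d j) :: 'a vec)"
      using True by (intro eq_vecI) auto
    moreover have "S *\<^sub>v embed_vec (Suc d) (unit_vec d j) = embed_vec (Suc d) (T *\<^sub>v unit_vec d j)"
      using R unfolding restricts_to_def by simp
    ultimately have "S *\<^sub>v unit_vec (Suc d) j = embed_vec (Suc d) (T *\<^sub>v unit_vec d j)"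
      by simp
    moreover have "S $$ (i, j) = (S *\<^sub>v unit_vec (Suc d) j) $ i" using S ij by auto
    ultimately have "S $$ (i, j) = (if i < d then T $$ (i, j) else 0)" using ij True T by auto
    then show ?thesis using ij True by (simp add: index_block_mat)
  next
    case False
    then show ?thesis using ij by (auto simp: index_block_mat less_Suc_eq)
  qed
qed (use S in auto)

lemma restricting_mats_eq_image:
  fixes T :: "'a::field mat"
  assumes T: "T \<in> carrier_mat d d"
  shows "{S \<in> carrier_mat (Suc d) (Suc d). restricts_to (Suc d) S T}
    = (\<lambda>(c, a). block_mat d T c a) ` (carrier_vec d \<times> UNIV)"
proof (intro equalityI subsetI)
  fix S assume "S \<in> {S \<in> carrier_mat (Suc d) (Suc d). restricts_to (Suc d) S T}"
  then have "S = block_mat d T (vec d (\<lambda>i. S $$ (i, d))) (S $$ (d, d))"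
    using restricts_to_imp_block_mat[OF _ T] by blast
  then show "S \<in> (\<lambda>(c, a). block_mat d T c a) ` (carrier_vec d \<times> UNIV)"
    by (intro image_eqI[of _ _ "(vec d (\<lambda>i. S $$ (i, d)), S $$ (d, d))"]) auto
next
  fix S assume "S \<in> (\<lambda>(c, a). block_mat d T c a) ` (carrier_vec d \<times> UNIV)"
  then obtain c a where "c \<in> carrier_vec d" and "S = block_mat d T c a" by auto
  then show "S \<in> {S \<in> carrier_mat (Suc d) (Suc d). restricts_to (Suc d) S T}"
    using restricts_to_block_mat[OF T] by simp
qed

lemma sum_restricting_mats:
  fixes T :: "'a::field mat"
  assumes T: "T \<in> carrier_mat d d"
  shows "(\<Sum>S\<in>{S \<in> carrier_mat (Suc d) (Suc d). restricts_to (Suc d) S T}. h S)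
    = (\<Sum>c\<in>carrier_vec d. \<Sum>a\<in>UNIV. h (block_mat d T c a))"
proof -
  have "inj_on (\<lambda>(c, a). block_mat d T c a) (carrier_vec d \<times> UNIV)"
    using block_mat_inject[OF T T] by (auto intro!: inj_onI)
  then show ?thesis
    unfolding restricting_mats_eq_image[OF T]
    by (simp add: sum.reindex sum.cartesian_product prod.case_distrib)
qed

section \<open>The sum \<open>E\<^sub>n\<close>\<close>

definition E_summand :: "int \<Rightarrow> nat \<Rightarrow> nat \<Rightarrow> (nat \<Rightarrow> int) \<Rightarrow> 'a::field mat \<Rightarrow> int" where
  "E_summand q n r f S =
     (if semi_idempotent n S \<and> mrank n S \<le> r then mu q (srk n S) * f (mrank n S) else 0)"

lemma mu_Suc: "mu q (Suc s) = - (q ^ s * mu q s)"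
proof -
  have "Suc s choose 2 = s + (s choose 2)"
    by (simp add: numeral_2_eq_2)
  then show ?thesis unfolding mu_def by (simp add: power_add)
qed

lemma E_sum_eq_sum_E_summand:
  fixes T :: "'a::{field,finite} mat"
  assumes T: "T \<in> carrier_mat d d"
  shows "E_sum q (Suc d) r f T
    = (\<Sum>c\<in>carrier_vec d. \<Sum>a\<in>UNIV. E_summand q (Suc d) r f (block_mat d T c a))"
proof -
  let ?R = "{S \<in> carrier_mat (Suc d) (Suc d). restricts_to (Suc d) S T}"
  have "E_sum q (Suc d) r f T = (\<Sum>S\<in>{S \<in> ?R. semi_idempotent (Suc d) S \<and> mrank (Suc d) S \<le> r}.
      mu q (srk (Suc d) S) * f (mrank (Suc d) S))"
    unfolding E_sum_def by (rule sum.cong) auto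
  also have "\<dots> = (\<Sum>S\<in>?R. E_summand q (Suc d) r f S)"
    unfolding E_summand_def by (rule sum.inter_filter) (simp add: restricting_mats_eq_image[OF T])
  finally show ?thesis unfolding sum_restricting_mats[OF T] .
qed

context
  fixes T :: "'a::{field,finite} mat" and d k :: nat
  assumes T: "T \<in> carrier_mat d d" and stable: "T ^\<^sub>m Suc k = T ^\<^sub>m k"
begin

lemma card_mat_kernel_stable_pow:
  "card (mat_kernel (T ^\<^sub>m k)) * CARD('a) ^ mrank d (T ^\<^sub>m k) = CARD('a) ^ d"
  using card_mat_kernel_idempotent[OF pow_carrier_mat[OF T]]
    pow_mat_add[OF T, of k k] pow_mat_stable[OF stable, of "k + k"] by simp

lemma stable_pow_mult_vec_eq_0:
  assumes c: "c \<in> carrier_vec d" and "T ^\<^sub>m j *\<^sub>v c = 0\<^sub>v d"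
  shows "T ^\<^sub>m k *\<^sub>v c = 0\<^sub>v d"
proof -
  have "T ^\<^sub>m k *\<^sub>v c = T ^\<^sub>m (k + j) *\<^sub>v c" using pow_mat_stable[OF stable, of "k + j"] by simp
  also have "\<dots> = T ^\<^sub>m k *\<^sub>v (T ^\<^sub>m j *\<^sub>v c)"
    using pow_mat_add[OF T, of k j] assoc_mult_mat_vec[OF pow_carrier_mat[OF T] pow_carrier_mat[OF T] c]
    by simp
  also have "\<dots> = 0\<^sub>v d" unfolding assms(2) using T by (intro eq_vecI) (auto simp: scalar_prod_def)
  finally show ?thesis .
qed

lemma semi_idempotent_block_mat_iff:
  assumes c: "c \<in> carrier_vec d"
  shows "semi_idempotent (Suc d) (block_mat d T c a) \<longleftrightarrow> a = 0 \<or> a = 1 \<and> T ^\<^sub>m k *\<^sub>v c = 0\<^sub>v d"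
proof
  assume "semi_idempotent (Suc d) (block_mat d T c a)"
  then obtain j where "block_mat d T c a ^\<^sub>m Suc j = block_mat d T c a ^\<^sub>m j"
    by (rule semi_idempotent_imp_pow_stable)
  then have corner: "pow_corner T c a (Suc j) = pow_corner T c a j" and "a ^ j * (a - 1) = 0"
    unfolding block_mat_pow_Suc_eq_iff[OF T c] by (auto simp: algebra_simps)
  then have a: "a = 0 \<or> a = 1" by auto
  have "T ^\<^sub>m j *\<^sub>v c = 0\<^sub>v d" if "a = 1"
  proof (rule eq_vecI)
    fix i assume "i < dim_vec (0\<^sub>v d :: 'a vec)"
    then show "(T ^\<^sub>m j *\<^sub>v c) $ i = 0\<^sub>v d $ i"
      using arg_cong[OF corner, of "\<lambda>v. v $ i"] that T c pow_corner_carrier[OF T c, of a j] by simp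
  qed (use T in simp)
  then show "a = 0 \<or> a = 1 \<and> T ^\<^sub>m k *\<^sub>v c = 0\<^sub>v d"
    using a stable_pow_mult_vec_eq_0[OF c] by blast
next
  assume a: "a = 0 \<or> a = 1 \<and> T ^\<^sub>m k *\<^sub>v c = 0\<^sub>v d"
  have "\<exists>j. block_mat d T c a ^\<^sub>m Suc j = block_mat d T c a ^\<^sub>m j"
  proof (cases "a = 0")
    case True
    then have "block_mat d T c a ^\<^sub>m Suc (Suc k) = block_mat d T c a ^\<^sub>m Suc k"
      unfolding block_mat_pow_Suc_eq_iff[OF T c] using stable pow_corner_zero[OF T c]
      by (simp del: pow_corner.simps)
    then show ?thesis by blast
  next
    case False
    then have "block_mat d T c a ^\<^sub>m Suc k = block_mat d T c a ^\<^sub>m k"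
      unfolding block_mat_pow_Suc_eq_iff[OF T c]
      using a stable T c pow_corner_carrier[OF T c, of 1 k] by simp
    then show ?thesis by blast
  qed
  then show "semi_idempotent (Suc d) (block_mat d T c a)"
    using pow_stable_imp_semi_idempotent[OF block_mat_carrier] by blast
qed

lemma srk_block_mat:
  assumes c: "c \<in> carrier_vec d" and semi: "semi_idempotent (Suc d) (block_mat d T c a)"
  shows "srk (Suc d) (block_mat d T c a) = mrank d (T ^\<^sub>m k) + (if a = 0 then 0 else 1)"
proof (rule srk_eqI)
  fix j assume "Suc k \<le> j"
  then obtain i where j: "j = Suc i" and i: "k \<le> i" by (cases j) auto
  have a: "a = 0 \<or> a = 1" using semi semi_idempotent_block_mat_iff[OF c] by blast
  then have a_pow: "a ^ j = a" unfolding j by auto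
  have "block_mat d T c a ^\<^sub>m j = block_mat d (T ^\<^sub>m k) (pow_corner T c a j) a"
    unfolding block_mat_pow[OF T c] a_pow pow_mat_stable[OF stable \<open>Suc k \<le> j\<close>[THEN Suc_leD]] ..
  moreover have "pow_corner T c a j \<in> vec_space.col_space d (T ^\<^sub>m k)" if "a = 0"
    unfolding that j pow_corner_zero[OF T c] pow_mat_stable[OF stable i]
      mem_col_space_iff[OF pow_carrier_mat[OF T]]
    using c by blast
  ultimately show "mrank (Suc d) (block_mat d T c a ^\<^sub>m j)
      = mrank d (T ^\<^sub>m k) + (if a = 0 then 0 else 1)"
    using rank_block_mat[OF pow_carrier_mat[OF T] pow_corner_carrier[OF T c]] by auto
qed

lemma E_summand_block_mat:
  assumes c: "c \<in> carrier_vec d" and r: "mrank d T \<le> r"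
  shows "E_summand q (Suc d) r f (block_mat d T c 0) =
      (if c \<in> vec_space.col_space d T then mu q (mrank d (T ^\<^sub>m k)) * f (mrank d T)
       else if mrank d T < r then mu q (mrank d (T ^\<^sub>m k)) * f (Suc (mrank d T)) else 0)"
    and "E_summand q (Suc d) r f (block_mat d T c 1) =
      (if c \<in> mat_kernel (T ^\<^sub>m k)
       then if mrank d T < r then mu q (Suc (mrank d (T ^\<^sub>m k))) * f (Suc (mrank d T)) else 0
       else 0)"
    and "a \<notin> {0, 1} \<Longrightarrow> E_summand q (Suc d) r f (block_mat d T c a) = 0"
  using semi_idempotent_block_mat_iff[OF c] srk_block_mat[OF c] rank_block_mat[OF T c] r c T
  unfolding E_summand_def mat_kernel_def by auto

lemma E_sum_eq:
  assumes r: "mrank d T \<le> r"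
  defines "q \<equiv> int CARD('a)"
  shows "E_sum q (Suc d) r f T = mu q (mrank d (T ^\<^sub>m k)) * q ^ mrank d T
    * (f (mrank d T) - (if mrank d T < r then f (Suc (mrank d T)) else 0))"
proof -
  define t where "t = mrank d T"
  define s where "s = mrank d (T ^\<^sub>m k)"
  define W where "W = vec_space.col_space d T"
  define K where "K = mat_kernel (T ^\<^sub>m k)"
  define X Y Z where "X = mu q s * f t" and "Y = (if t < r then mu q s * f (Suc t) else 0)"
    and "Z = (if t < r then mu q (Suc s) * f (Suc t) else 0)"
  have "W \<subseteq> carrier_vec d" and "K \<subseteq> carrier_vec d"
    using col_space_is_subspace[OF T] T unfolding W_def K_def is_subspace_def mat_kernel_def by auto
  have "E_sum q (Suc d) r f T
      = (\<Sum>c\<in>carrier_vec d. \<Sum>a\<in>UNIV. E_summand q (Suc d) r f (block_mat d T c a))"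
    by (rule E_sum_eq_sum_E_summand[OF T])
  also have "\<dots> = (\<Sum>c\<in>carrier_vec d. (if c \<in> W then X else Y) + (if c \<in> K then Z else 0))"
  proof (rule sum.cong[OF refl])
    fix c :: "'a vec" assume c: "c \<in> carrier_vec d"
    have "(\<Sum>a\<in>UNIV. E_summand q (Suc d) r f (block_mat d T c a))
        = (\<Sum>a\<in>{0, 1}. E_summand q (Suc d) r f (block_mat d T c a))"
      using E_summand_block_mat(3)[OF c r] by (intro sum.mono_neutral_right) auto
    then show "(\<Sum>a\<in>UNIV. E_summand q (Suc d) r f (block_mat d T c a))
        = (if c \<in> W then X else Y) + (if c \<in> K then Z else 0)"
      using E_summand_block_mat(1,2)[OF c r] unfolding W_def K_def X_def Y_def Z_def t_def s_def
      by simp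
  qed
  also have "\<dots> = int (card W) * X + int (card (carrier_vec d - W)) * Y + int (card K) * Z"
    using sum_if_mem_const[OF _ \<open>W \<subseteq> carrier_vec d\<close>, of X Y]
      sum_if_mem_const[OF _ \<open>K \<subseteq> carrier_vec d\<close>, of Z 0]
    by (simp add: sum.distrib)
  also have "\<dots> = mu q s * q ^ t * (f t - (if t < r then f (Suc t) else 0))"
  proof -
    have W: "int (card W) = q ^ t"
      unfolding W_def t_def q_def using vec_space.card_col_space[OF T] by simp
    have W_compl: "int (card (carrier_vec d - W)) = q ^ d - q ^ t"
      using card_carrier_vec_diff_col_space[OF T] unfolding W_def t_def q_def .
    have "int (card K) * q ^ s = q ^ d"
      using arg_cong[OF card_mat_kernel_stable_pow, of int] unfolding K_def s_def q_def by simp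
    then have "int (card K) * Z = - (q ^ d * Y)"
      unfolding Y_def Z_def mu_Suc by (simp add: mult.assoc[symmetric])
    then show ?thesis
      unfolding W W_compl X_def Y_def by (cases "t < r") (simp_all add: algebra_simps)
  qed
  finally show ?thesis unfolding t_def s_def .
qed

end

theorem proposition3p5:
  fixes T :: "'a::{field,finite} mat" and n r :: nat and f :: "nat \<Rightarrow> int"
  assumes "n \<ge> 1"
    and "T \<in> carrier_mat (n - 1) (n - 1)"
    and "semi_idempotent (n - 1) T"
    and "mrank (n - 1) T \<le> r"
  defines "q \<equiv> int (card (UNIV :: 'a set))"
  shows "(mrank (n - 1) T < r \<longrightarrow>
           E_sum q n r f T = mu q (srk (n - 1) T) * q ^ mrank (n - 1) T
              * (f (mrank (n - 1) T) - f (mrank (n - 1) T + 1)))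
       \<and> (mrank (n - 1) T = r \<longrightarrow>
           E_sum q n r f T = mu q (srk (n - 1) T) * q ^ mrank (n - 1) T * f (mrank (n - 1) T))"
proof -
  obtain d where n: "n = Suc d" using assms(1) by (cases n) auto
  have T: "T \<in> carrier_mat d d" using assms(2) n by simp
  obtain k where stable: "T ^\<^sub>m Suc k = T ^\<^sub>m k"
    using semi_idempotent_imp_pow_stable[OF assms(3)] .
  have "E_sum q n r f T = mu q (srk d T) * q ^ mrank d T
      * (f (mrank d T) - (if mrank d T < r then f (Suc (mrank d T)) else 0))"
    unfolding n q_def srk_pow_stable[OF stable] using E_sum_eq[OF T stable] assms(4) n by simp
  then show ?thesis using n by auto
qed

end
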